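(* Let $q$ be a prime power, let $k\ge 5$ and $n=2k\le q$. Let $\alpha_1,\dots,\alpha_n\in\mathbb{F}_q$ be pairwise distinct, let $G_{k-1,k-2}$ be the $k\times n$ matrix whose rows are $(\alpha_1^{e},\dots,\alpha_n^{e})$ for $e=0,1,\dots,k-3,k,k+1$, let $\mathbf{v}=(v_1,\dots,v_n)\in(\mathbb{F}_q^* )^n$, and let $C_{\mathbf v}$ be the linear code generated by $G_{k-1,k-2}\cdot\mathrm{diag}(v_1,\dots,v_n)$. Let $u_i=\prod_{j\ne i}(\alpha_i-\alpha_j)^{-1}$ and $S_t=S_t(\alpha_1,\dots,\alpha_n)$. Then $C_{\mathbf v}$ is self-dual if and only if (1) there exists $\lambda\in\mathbb{F}_q^*$ with $v_i^2=\lambda u_i$ for all $1\le i\le n$, and (2) $S_1=S_2=S_3=0$.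
   Context: Convention: $0^0=1$. $S_t(x_1,\dots,x_m)=\sum_{t_1+\dots+t_m=t,\ t_i\ge0}x_1^{t_1}\cdots x_m^{t_m}$ is the complete homogeneous symmetric polynomial of degree $t$. A linear code $C$ is self-dual if $C=C^\perp$, where $C^\perp$ is the dual with respect to the Euclidean inner product. *)

theory Defs
  imports Main "HOL-Library.FuncSet" "HOL-Library.Cardinality"
begin

text \<open>Vectors of length n over a field are functions nat => 'a, indexed 0..n-1,
  with value 0 outside {0..<n}.\<close>

definition vecs :: "nat \<Rightarrow> (nat \<Rightarrow> 'a::zero) set" where
  "vecs n = {x. \<forall>i\<ge>n. x i = 0}"

definition row_code :: "nat \<Rightarrow> nat \<Rightarrow> (nat \<Rightarrow> nat \<Rightarrow> 'a::field) \<Rightarrow> (nat \<Rightarrow> 'a) set" where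
  "row_code k n M = {c. \<exists>m::nat \<Rightarrow> 'a. c = (\<lambda>i. if i < n then (\<Sum>r<k. m r * M r i) else 0)}"

definition dual_code :: "nat \<Rightarrow> (nat \<Rightarrow> 'a::field) set \<Rightarrow> (nat \<Rightarrow> 'a) set" where
  "dual_code n C = {x \<in> vecs n. \<forall>c\<in>C. (\<Sum>i<n. x i * c i) = 0}"

definition self_dual :: "nat \<Rightarrow> (nat \<Rightarrow> 'a::field) set \<Rightarrow> bool" where
  "self_dual n C \<longleftrightarrow> C = dual_code n C"

text \<open>Exponent of row r of G_{k-1,k-2}: rows have exponents 0,1,...,k-3,k,k+1.\<close>
definition gexp :: "nat \<Rightarrow> nat \<Rightarrow> nat" where
  "gexp k r = (if r + 3 \<le> k then r else r + 2)"

definition Gmat :: "nat \<Rightarrow> (nat \<Rightarrow> 'a::field) \<Rightarrow> (nat \<Rightarrow> 'a) \<Rightarrow> nat \<Rightarrow> nat \<Rightarrow> 'a" where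
  "Gmat k \<alpha> v r i = \<alpha> i ^ gexp k r * v i"

definition C_v :: "nat \<Rightarrow> nat \<Rightarrow> (nat \<Rightarrow> 'a::field) \<Rightarrow> (nat \<Rightarrow> 'a) \<Rightarrow> (nat \<Rightarrow> 'a) set" where
  "C_v k n \<alpha> v = row_code k n (Gmat k \<alpha> v)"

text \<open>Complete homogeneous symmetric polynomial S_t(x_0,...,x_{m-1}) (0^0 = 1).\<close>
definition S_hom :: "nat \<Rightarrow> nat \<Rightarrow> (nat \<Rightarrow> 'a::comm_semiring_1) \<Rightarrow> 'a" where
  "S_hom t m x = (\<Sum>f \<in> {f \<in> {0..<m} \<rightarrow>\<^sub>E {0..t}. (\<Sum>i<m. f i) = t}. \<Prod>i<m. x i ^ f i)"

definition u_coef :: "nat \<Rightarrow> (nat \<Rightarrow> 'a::field) \<Rightarrow> nat \<Rightarrow> 'a" where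
  "u_coef n \<alpha> i = (\<Prod>j\<in>{0..<n} - {i}. inverse (\<alpha> i - \<alpha> j))"

end

theory Submission
  imports Defs "HOL-Computational_Algebra.Polynomial"
begin

text \<open>Write W t for the power moment \<Sum>i<n. v i^2 * \<alpha> i^t. The inner product of the rows of
  exponents e and e' of the generator matrix is W (e + e'), and the pairwise sums of the exponent
  set E = {0..k-3} \<union> {k, k+1} are exactly the t \<le> n + 2 other than n - 1; so C_v is
  self-orthogonal iff these W t vanish. For t \<le> n - 2 this says that (v i^2) lies in the kernel of an
  (n-1) x n Vandermonde matrix, which is spanned by (u i), as one sees by testing against the Lagrange
  basis polynomials; hence v i^2 = \<lambda> u i with \<lambda> = W (n - 1) \<noteq> 0. The classical identity
  \<Sum>i. u i * \<alpha> i^t = S (t + 1 - n) then turns W n = W (n+1) = W (n+2) = 0 into S 1 = S 2 = S 3 = 0.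
  Self-orthogonality already forces self-duality: a dual vector has the form x i = v i * p (\<alpha> i)
  with deg p < n, and orthogonality to the rows kills the coefficients of p outside E from the top
  down, because n - 1 - E is the complement of E in {0..n-1}.\<close>

section \<open>Complete homogeneous symmetric polynomials\<close>

definition hom_exponents :: "nat \<Rightarrow> nat \<Rightarrow> (nat \<Rightarrow> nat) set" where
  "hom_exponents t m = {f \<in> {0..<m} \<rightarrow>\<^sub>E {0..t}. (\<Sum>i<m. f i) = t}"

lemma S_hom_altdef: "S_hom t m x = (\<Sum>f\<in>hom_exponents t m. \<Prod>i<m. x i ^ f i)"
  by (simp add: S_hom_def hom_exponents_def)

lemma finite_hom_exponents: "finite (hom_exponents t m)"
  unfolding hom_exponents_def
  by (rule finite_subset[OF _ finite_PiE[of "{0..<m}" "\<lambda>_. {0..t}"]]) auto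

lemma hom_exponents_Suc:
  "hom_exponents t (Suc m) = (\<lambda>(j, g). g(m := j)) ` (SIGMA j:{..t}. hom_exponents (t - j) m)"
proof (intro equalityI subsetI)
  fix f assume f: "f \<in> hom_exponents t (Suc m)"
  then have sum_f: "f m + (\<Sum>i<m. f i) = t"
    by (simp add: hom_exponents_def)
  have "f i \<le> (\<Sum>i<m. f i)" if "i < m" for i
    using that by (intro member_le_sum) auto
  then have "f(m := undefined) \<in> hom_exponents (t - f m) m"
    using f sum_f by (auto simp: hom_exponents_def PiE_def extensional_def Pi_def)
  then show "f \<in> (\<lambda>(j, g). g(m := j)) ` (SIGMA j:{..t}. hom_exponents (t - j) m)"
    using sum_f by (intro rev_image_eqI[of "(f m, f(m := undefined))"]) auto
next
  fix f assume "f \<in> (\<lambda>(j, g). g(m := j)) ` (SIGMA j:{..t}. hom_exponents (t - j) m)"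
  then obtain j g where f: "f = g(m := j)" and j: "j \<le> t" and g: "g \<in> hom_exponents (t - j) m"
    by auto
  have "(\<Sum>i<m. f i) = (\<Sum>i<m. g i)" unfolding f by (rule sum.cong) auto
  then show "f \<in> hom_exponents t (Suc m)"
    using g j unfolding f by (auto simp: hom_exponents_def PiE_def extensional_def Pi_def less_Suc_eq)
qed

lemma inj_on_hom_exponents_Suc:
  "inj_on (\<lambda>(j, g). g(m := j)) (SIGMA j:{..t}. hom_exponents (t - j) m)"
proof (rule inj_onI, clarsimp)
  fix j g j' g'
  assume "g \<in> hom_exponents (t - j) m" "g' \<in> hom_exponents (t - j') m" "g(m := j) = g'(m := j')"
  moreover have "g m = undefined" "g' m = undefined"
    using calculation(1,2) by (auto simp: hom_exponents_def PiE_def extensional_def)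
  ultimately show "j = j' \<and> g = g'"
    by (metis fun_upd_same fun_upd_triv fun_upd_upd)
qed

lemma S_hom_Suc:
  "S_hom t (Suc m) x = (\<Sum>j\<le>t. x m ^ j * S_hom (t - j) m x)"
proof -
  have "S_hom t (Suc m) x = (\<Sum>(j, g)\<in>(SIGMA j:{..t}. hom_exponents (t - j) m). \<Prod>i<Suc m. x i ^ (g(m := j)) i)"
    unfolding S_hom_altdef hom_exponents_Suc
    by (subst sum.reindex[OF inj_on_hom_exponents_Suc]) (simp add: case_prod_unfold)
  also have "\<dots> = (\<Sum>j\<le>t. \<Sum>g\<in>hom_exponents (t - j) m. x m ^ j * (\<Prod>i<m. x i ^ g i))"
    by (subst sum.Sigma[symmetric]) (auto simp: finite_hom_exponents mult.commute intro!: sum.cong prod.cong)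
  finally show ?thesis by (simp add: S_hom_altdef sum_distrib_left)
qed

lemma S_hom_no_vars: "S_hom t 0 x = (if t = 0 then 1 else 0)"
  by (simp add: S_hom_altdef hom_exponents_def)

lemma S_hom_0: "S_hom 0 m x = 1"
  by (induction m) (simp_all add: S_hom_no_vars S_hom_Suc)

lemma S_hom_Suc_Suc:
  "S_hom (Suc t) (Suc m) x = S_hom (Suc t) m x + x m * S_hom t (Suc m) x"
  by (simp add: S_hom_Suc sum.atMost_Suc_shift sum_distrib_left mult.assoc del: sum.atMost_Suc)

section \<open>Divided differences of powers\<close>

definition divdiff_power :: "(nat \<Rightarrow> 'a::field) \<Rightarrow> nat set \<Rightarrow> nat \<Rightarrow> 'a" where
  "divdiff_power \<alpha> A t = (\<Sum>i\<in>A. \<alpha> i ^ t * (\<Prod>j\<in>A - {i}. inverse (\<alpha> i - \<alpha> j)))"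

lemma divdiff_power_Suc:
  assumes "finite A" "b \<in> A" "inj_on \<alpha> A"
  shows "divdiff_power \<alpha> A (Suc t) = divdiff_power \<alpha> (A - {b}) t + \<alpha> b * divdiff_power \<alpha> A t"
proof -
  have "divdiff_power \<alpha> A (Suc t) - \<alpha> b * divdiff_power \<alpha> A t =
      (\<Sum>i\<in>A. \<alpha> i ^ t * (\<alpha> i - \<alpha> b) * (\<Prod>j\<in>A - {i}. inverse (\<alpha> i - \<alpha> j)))"
    unfolding divdiff_power_def by (simp add: sum_distrib_left sum_subtractf[symmetric] algebra_simps)
  also have "\<dots> = (\<Sum>i\<in>A - {b}. \<alpha> i ^ t * (\<alpha> i - \<alpha> b) * (\<Prod>j\<in>A - {i}. inverse (\<alpha> i - \<alpha> j)))"
    using assms by (intro sum.mono_neutral_right) auto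
  also have "\<dots> = divdiff_power \<alpha> (A - {b}) t"
    unfolding divdiff_power_def
  proof (rule sum.cong[OF refl])
    fix i assume i: "i \<in> A - {b}"
    then have "\<alpha> i - \<alpha> b \<noteq> 0" using assms(2,3) by (auto dest: inj_onD)
    moreover have "(\<Prod>j\<in>A - {i}. inverse (\<alpha> i - \<alpha> j)) =
        inverse (\<alpha> i - \<alpha> b) * (\<Prod>j\<in>A - {b} - {i}. inverse (\<alpha> i - \<alpha> j))"
      using i assms(1,2) prod.remove[of "A - {i}" b] by (simp add: Diff_insert2[symmetric] insert_commute)
    ultimately show "\<alpha> i ^ t * (\<alpha> i - \<alpha> b) * (\<Prod>j\<in>A - {i}. inverse (\<alpha> i - \<alpha> j)) =
        \<alpha> i ^ t * (\<Prod>j\<in>A - {b} - {i}. inverse (\<alpha> i - \<alpha> j))"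
      by simp
  qed
  finally show ?thesis by (simp add: algebra_simps)
qed

lemma divdiff_power_0:
  assumes "finite A" "inj_on \<alpha> A"
  shows "divdiff_power \<alpha> A 0 = (if card A = 1 then 1 else 0)"
  using assms
proof (induction "card A" arbitrary: A rule: less_induct)
  case less
  show ?case
  proof (cases "card A \<le> 1")
    case True
    then have "A = {} \<or> (\<exists>a. A = {a})"
      using less.prems(1) by (auto simp: le_Suc_eq card_1_singleton_iff)
    then show ?thesis by (auto simp: divdiff_power_def)
  next
    case False
    then obtain a b where ab: "a \<in> A" "b \<in> A" "a \<noteq> b"
      using less.prems(1) by (metis card_le_Suc0_iff_eq One_nat_def)
    have removed: "divdiff_power \<alpha> (A - {c}) 0 = (if card A = 2 then 1 else 0)" if "c \<in> A" for c
    proof -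
      have "card (A - {c}) < card A" "inj_on \<alpha> (A - {c})"
        using that less.prems by (auto intro: card_Diff1_less inj_on_subset simp del: card_Diff_insert)
      then show ?thesis
        using less.hyps[of "A - {c}"] less.prems(1) that by (cases "card A = 2") auto
    qed
    have "\<alpha> b * divdiff_power \<alpha> A 0 = \<alpha> a * divdiff_power \<alpha> A 0"
      using divdiff_power_Suc[OF less.prems(1) ab(1) less.prems(2), of 0]
        divdiff_power_Suc[OF less.prems(1) ab(2) less.prems(2), of 0] removed ab
      by simp
    then have "(\<alpha> b - \<alpha> a) * divdiff_power \<alpha> A 0 = 0"
      by (simp add: algebra_simps)
    moreover have "\<alpha> b - \<alpha> a \<noteq> 0" using ab less.prems(2) by (auto dest: inj_onD)
    ultimately show ?thesis using False by simp
  qed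
qed

lemma divdiff_power_atLeast0LessThan:
  assumes "inj_on \<alpha> {0..<m}"
  shows "divdiff_power \<alpha> {0..<m} t = (if t + 1 < m then 0 else S_hom (t + 1 - m) m \<alpha>)"
  using assms
proof (induction m arbitrary: t)
  case 0
  then show ?case by (simp add: divdiff_power_def S_hom_no_vars)
next
  case (Suc m)
  have IH: "divdiff_power \<alpha> {0..<m} t = (if t + 1 < m then 0 else S_hom (t + 1 - m) m \<alpha>)" for t
    using Suc.IH[OF inj_on_subset[OF Suc.prems]] by auto
  show ?case
  proof (induction t)
    case 0
    show ?case using divdiff_power_0[OF _ Suc.prems] by (simp add: S_hom_0)
  next
    case (Suc t)
    have rec: "divdiff_power \<alpha> {0..<Suc m} (Suc t) = divdiff_power \<alpha> {0..<m} t + \<alpha> m * divdiff_power \<alpha> {0..<Suc m} t"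
      using divdiff_power_Suc[OF _ _ \<open>inj_on \<alpha> {0..<Suc m}\<close>, of m t] by (simp add: atLeast0_lessThan_Suc)
    consider "t + 1 < m" | "t + 1 = m" | "m \<le> t" by linarith
    then show ?case
    proof cases
      case 3
      then obtain d where d: "t = m + d" using le_Suc_ex by blast
      show ?thesis
        using rec Suc.IH IH[of t] S_hom_Suc_Suc[of d m \<alpha>] unfolding d by (simp add: Suc_diff_le)
    qed (use rec Suc.IH IH[of t] in \<open>simp_all add: S_hom_0\<close>)
  qed
qed

section \<open>Power moments and Lagrange interpolation\<close>

definition power_moment :: "nat \<Rightarrow> (nat \<Rightarrow> 'a::comm_semiring_1) \<Rightarrow> (nat \<Rightarrow> 'a) \<Rightarrow> nat \<Rightarrow> 'a" where
  "power_moment n w \<alpha> t = (\<Sum>i<n. w i * \<alpha> i ^ t)"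

lemma power_moment_u_coef:
  assumes "inj_on \<alpha> {0..<n}"
  shows "power_moment n (u_coef n \<alpha>) \<alpha> t = (if t + 1 < n then 0 else S_hom (t + 1 - n) n \<alpha>)"
  using divdiff_power_atLeast0LessThan[OF assms, of t]
  by (simp add: power_moment_def divdiff_power_def u_coef_def atLeast0LessThan mult.commute)

lemma power_moment_scale: "power_moment n (\<lambda>i. c * w i) \<alpha> t = c * power_moment n w \<alpha> t"
  by (simp add: power_moment_def sum_distrib_left mult.assoc)

lemma power_moment_shift: "power_moment n (\<lambda>i. w i * \<alpha> i ^ e) \<alpha> t = power_moment n w \<alpha> (t + e)"
  by (simp add: power_moment_def power_add mult_ac)

lemma poly_eq_sum_coeff:
  fixes p :: "'a::comm_semiring_1 poly"
  assumes "degree p < N"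
  shows "poly p x = (\<Sum>l<N. coeff p l * x ^ l)"
proof -
  have "(\<Sum>l\<le>degree p. coeff p l * x ^ l) = (\<Sum>l<N. coeff p l * x ^ l)"
    using assms by (intro sum.mono_neutral_left) (auto simp: coeff_eq_0)
  then show ?thesis by (simp add: poly_altdef)
qed

lemma sum_mult_poly_eq_power_moments:
  assumes "degree p < N"
  shows "(\<Sum>i<n. w i * poly p (\<alpha> i)) = (\<Sum>l<N. coeff p l * power_moment n w \<alpha> l)"
  by (simp add: poly_eq_sum_coeff[OF assms] power_moment_def sum_distrib_left sum_distrib_right
      sum.swap[of _ "{..<N}"] mult_ac)

definition lagrange_basis :: "nat \<Rightarrow> (nat \<Rightarrow> 'a::field) \<Rightarrow> nat \<Rightarrow> 'a poly" where
  "lagrange_basis n \<alpha> i = (\<Prod>j\<in>{0..<n} - {i}. [:- \<alpha> j, 1:])"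

lemma degree_lagrange_basis: "i < n \<Longrightarrow> degree (lagrange_basis n \<alpha> i) = n - 1"
  by (simp add: lagrange_basis_def degree_prod_eq_sum_degree)

lemma lead_coeff_lagrange_basis:
  assumes "i < n"
  shows "coeff (lagrange_basis n \<alpha> i) (n - 1) = 1"
  using lead_coeff_prod[of "\<lambda>j. [:- \<alpha> j, 1:]" "{0..<n} - {i}"] degree_lagrange_basis[OF assms, of \<alpha>]
  by (simp add: lagrange_basis_def)

lemma poly_lagrange_basis_other:
  "j < n \<Longrightarrow> j \<noteq> i \<Longrightarrow> poly (lagrange_basis n \<alpha> i) (\<alpha> j) = 0"
  by (auto simp: lagrange_basis_def poly_prod intro!: prod_zero)

lemma poly_lagrange_basis_self:
  assumes "inj_on \<alpha> {0..<n}" "i < n"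
  shows "poly (lagrange_basis n \<alpha> i) (\<alpha> i) * u_coef n \<alpha> i = 1"
proof -
  have "(\<Prod>j\<in>{0..<n} - {i}. \<alpha> i - \<alpha> j) \<noteq> 0"
    using assms by (auto dest: inj_onD)
  then show ?thesis
    by (simp add: lagrange_basis_def u_coef_def poly_prod prod_inversef[symmetric] prod.distrib[symmetric])
qed

lemma interpolating_poly_exists:
  fixes \<alpha> z :: "nat \<Rightarrow> 'a::field"
  assumes "inj_on \<alpha> {0..<n}" "0 < n"
  obtains p where "degree p < n" "\<And>i. i < n \<Longrightarrow> poly p (\<alpha> i) = z i"
proof
  define p where "p = (\<Sum>j<n. smult (z j * u_coef n \<alpha> j) (lagrange_basis n \<alpha> j))"
  have "degree p \<le> n - 1"
    unfolding p_def
    by (intro degree_sum_le) (auto intro: le_trans[OF degree_smult_le] simp: degree_lagrange_basis)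
  then show "degree p < n"
    using assms(2) by linarith
  fix i assume i: "i < n"
  have "poly p (\<alpha> i) = z i * (poly (lagrange_basis n \<alpha> i) (\<alpha> i) * u_coef n \<alpha> i)"
    unfolding p_def poly_sum using i
    by (subst sum.remove[of _ i]) (auto simp: poly_lagrange_basis_other intro!: sum.neutral)
  then show "poly p (\<alpha> i) = z i"
    using poly_lagrange_basis_self[OF assms(1) i] by simp
qed

lemma power_moments_vanish_imp_u_coef_multiple:
  assumes inj: "inj_on \<alpha> {0..<n}" and vanish: "\<And>t. t + 2 \<le> n \<Longrightarrow> power_moment n w \<alpha> t = 0"
    and i: "i < n"
  shows "w i = power_moment n w \<alpha> (n - 1) * u_coef n \<alpha> i"
proof -
  let ?L = "lagrange_basis n \<alpha> i"
  have "w i * poly ?L (\<alpha> i) = (\<Sum>j<n. w j * poly ?L (\<alpha> j))"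
    using i by (subst sum.remove[of _ i]) (auto simp: poly_lagrange_basis_other intro!: sum.neutral[symmetric])
  also have "\<dots> = (\<Sum>l<n. coeff ?L l * power_moment n w \<alpha> l)"
    using i by (intro sum_mult_poly_eq_power_moments) (simp add: degree_lagrange_basis)
  also have "\<dots> = coeff ?L (n - 1) * power_moment n w \<alpha> (n - 1)"
  proof -
    have "power_moment n w \<alpha> l = 0" if "l < n" "l \<noteq> n - 1" for l
      using that by (intro vanish) linarith
    then show ?thesis
      using i by (subst sum.remove[of _ "n - 1"]) (auto intro!: sum.neutral)
  qed
  finally have "w i * poly ?L (\<alpha> i) = power_moment n w \<alpha> (n - 1)"
    using lead_coeff_lagrange_basis[OF i, of \<alpha>] by simp
  then show ?thesis
    using poly_lagrange_basis_self[OF inj i] by (metis mult.assoc mult.right_neutral)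
qed

lemma power_moment_top_nonzero:
  fixes \<alpha> w :: "nat \<Rightarrow> 'a::field"
  assumes inj: "inj_on \<alpha> {0..<n}" and vanish: "\<And>t. t + 2 \<le> n \<Longrightarrow> power_moment n w \<alpha> t = 0"
    and "i < n" "w i \<noteq> 0"
  shows "power_moment n w \<alpha> (n - 1) \<noteq> 0"
  using power_moments_vanish_imp_u_coef_multiple[OF inj vanish \<open>i < n\<close>] \<open>w i \<noteq> 0\<close> by auto

lemma power_moments_vanish_iff:
  fixes \<alpha> w :: "nat \<Rightarrow> 'a::field"
  assumes inj: "inj_on \<alpha> {0..<n}" and w: "\<forall>i<n. w i \<noteq> 0" and "0 < n"
  shows "(\<forall>t\<le>n + 2. t \<noteq> n - 1 \<longrightarrow> power_moment n w \<alpha> t = 0) \<longleftrightarrow>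
    ((\<exists>lam. lam \<noteq> 0 \<and> (\<forall>i<n. w i = lam * u_coef n \<alpha> i)) \<and>
     S_hom 1 n \<alpha> = 0 \<and> S_hom 2 n \<alpha> = 0 \<and> S_hom 3 n \<alpha> = 0)"
proof -
  have moments: "power_moment n w \<alpha> t = lam * (if t + 1 < n then 0 else S_hom (t + 1 - n) n \<alpha>)"
    if "\<forall>i<n. w i = lam * u_coef n \<alpha> i" for lam t
  proof -
    have "power_moment n w \<alpha> t = power_moment n (\<lambda>i. lam * u_coef n \<alpha> i) \<alpha> t"
      using that by (simp add: power_moment_def)
    then show ?thesis by (simp add: power_moment_scale power_moment_u_coef[OF inj])
  qed
  show ?thesis
  proof
    assume vanish: "\<forall>t\<le>n + 2. t \<noteq> n - 1 \<longrightarrow> power_moment n w \<alpha> t = 0"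
    define lam where "lam = power_moment n w \<alpha> (n - 1)"
    have w_eq: "\<forall>i<n. w i = lam * u_coef n \<alpha> i"
      using power_moments_vanish_imp_u_coef_multiple[OF inj] vanish unfolding lam_def
      by (simp add: mult.commute)
    have "lam \<noteq> 0"
      using power_moment_top_nonzero[OF inj, of w 0] vanish w \<open>0 < n\<close> unfolding lam_def by simp
    moreover have "S_hom j n \<alpha> = 0" if "1 \<le> j" "j \<le> 3" for j
      using moments[OF w_eq, of "n - 1 + j"] vanish \<open>lam \<noteq> 0\<close> that \<open>0 < n\<close> by simp
    ultimately show "(\<exists>lam. lam \<noteq> 0 \<and> (\<forall>i<n. w i = lam * u_coef n \<alpha> i)) \<and>
        S_hom 1 n \<alpha> = 0 \<and> S_hom 2 n \<alpha> = 0 \<and> S_hom 3 n \<alpha> = 0"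
      using w_eq by auto
  next
    assume "(\<exists>lam. lam \<noteq> 0 \<and> (\<forall>i<n. w i = lam * u_coef n \<alpha> i)) \<and>
        S_hom 1 n \<alpha> = 0 \<and> S_hom 2 n \<alpha> = 0 \<and> S_hom 3 n \<alpha> = 0"
    then obtain lam where w_eq: "\<forall>i<n. w i = lam * u_coef n \<alpha> i"
      and S: "S_hom 1 n \<alpha> = 0" "S_hom 2 n \<alpha> = 0" "S_hom 3 n \<alpha> = 0"
      by blast
    have "power_moment n w \<alpha> t = 0" if "t \<le> n + 2" "t \<noteq> n - 1" for t
    proof -
      have "t + 1 < n \<or> t + 1 - n \<in> {1, 2, 3}" using that by auto
      then show ?thesis using moments[OF w_eq, of t] S by auto
    qed
    then show "\<forall>t\<le>n + 2. t \<noteq> n - 1 \<longrightarrow> power_moment n w \<alpha> t = 0" by blast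
  qed
qed

section \<open>Codes spanned by the rows of a matrix\<close>

lemma row_code_subset_vecs: "row_code k n M \<subseteq> vecs n"
  by (auto simp: row_code_def vecs_def)

lemma row_mem_row_code:
  assumes "r < k"
  shows "(\<lambda>i. if i < n then M r i else 0) \<in> row_code k n M"
proof -
  have "(\<Sum>s<k. (if s = r then 1 else 0) * M s i) = (\<Sum>s<k. if s = r then M r i else 0)" for i
    by (rule sum.cong) auto
  then have unit: "(\<Sum>s<k. (if s = r then 1 else 0) * M s i) = M r i" for i
    using assms by simp
  show ?thesis
    unfolding row_code_def by (intro CollectI exI[of _ "\<lambda>s. if s = r then 1 else 0"]) (simp only: unit)
qed

lemma dual_code_row_code_orthogonal:
  assumes "x \<in> dual_code n (row_code k n M)" "r < k"
  shows "(\<Sum>i<n. x i * M r i) = 0"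
proof -
  have "\<forall>c\<in>row_code k n M. (\<Sum>i<n. x i * c i) = 0"
    using assms(1) by (simp add: dual_code_def)
  from bspec[OF this row_mem_row_code[OF assms(2)]] show ?thesis by simp
qed

lemma row_code_self_orthogonal_iff:
  "row_code k n M \<subseteq> dual_code n (row_code k n M) \<longleftrightarrow>
   (\<forall>r<k. \<forall>s<k. (\<Sum>i<n. M r i * M s i) = 0)"
proof
  assume "row_code k n M \<subseteq> dual_code n (row_code k n M)"
  then show "\<forall>r<k. \<forall>s<k. (\<Sum>i<n. M r i * M s i) = 0"
    using dual_code_row_code_orthogonal row_mem_row_code by fastforce
next
  assume orth: "\<forall>r<k. \<forall>s<k. (\<Sum>i<n. M r i * M s i) = 0"
  have "(\<Sum>i<n. (\<Sum>r<k. m r * M r i) * (\<Sum>s<k. m' s * M s i)) = 0" for m m'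
  proof -
    have "(\<Sum>i<n. (\<Sum>r<k. m r * M r i) * (\<Sum>s<k. m' s * M s i)) =
        (\<Sum>r<k. \<Sum>s<k. m r * m' s * (\<Sum>i<n. M r i * M s i))"
      by (simp add: sum_product sum_distrib_left sum.swap[of _ "{..<n}"] mult_ac)
    then show ?thesis using orth by simp
  qed
  then show "row_code k n M \<subseteq> dual_code n (row_code k n M)"
    using row_code_subset_vecs by (fastforce simp: dual_code_def row_code_def)
qed

section \<open>The exponent set of the generator matrix\<close>

definition exponent_set :: "nat \<Rightarrow> nat set" where
  "exponent_set k = gexp k ` {..<k}"

lemma inj_on_gexp: "inj_on (gexp k) {..<k}"
  by (auto simp: inj_on_def gexp_def split: if_splits)

lemma exponent_set_le: "e \<in> exponent_set k \<Longrightarrow> e \<le> k + 1"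
  by (auto simp: exponent_set_def gexp_def)

lemma mem_exponent_set_iff:
  assumes "2 \<le> k"
  shows "e \<in> exponent_set k \<longleftrightarrow> e + 3 \<le> k \<or> e = k \<or> e = k + 1"
proof
  assume "e \<in> exponent_set k"
  then show "e + 3 \<le> k \<or> e = k \<or> e = k + 1"
    by (auto simp: exponent_set_def gexp_def)
next
  assume "e + 3 \<le> k \<or> e = k \<or> e = k + 1"
  then have "e = gexp k (if e + 3 \<le> k then e else e - 2)" "(if e + 3 \<le> k then e else e - 2) < k"
    using assms by (auto simp: gexp_def)
  then show "e \<in> exponent_set k"
    unfolding exponent_set_def by blast
qed

lemma exponent_set_add:
  assumes "2 \<le> k" "e \<in> exponent_set k" "e' \<in> exponent_set k"
  shows "e + e' \<le> 2 * k + 2" "e + e' \<noteq> 2 * k - 1"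
  using assms by (auto simp: mem_exponent_set_iff)

lemma exponent_set_add_cover:
  assumes "5 \<le> k" "t \<le> 2 * k + 2" "t \<noteq> 2 * k - 1"
  obtains e e' where "e \<in> exponent_set k" "e' \<in> exponent_set k" "t = e + e'"
proof -
  have "\<exists>e e'. (e + 3 \<le> k \<or> e = k \<or> e = k + 1) \<and> (e' + 3 \<le> k \<or> e' = k \<or> e' = k + 1) \<and> t = e + e'"
  proof -
    \<comment> \<open>The first two ranges overlap because k \<ge> 5.\<close>
    consider "t + 6 \<le> 2 * k" | "k \<le> t" "t + 3 \<le> 2 * k" | "t = 2 * k - 2" | "2 * k \<le> t"
      using assms by linarith
    then show ?thesis
    proof cases
      case 1
      then show ?thesis by (intro exI[of _ "min t (k - 3)"] exI[of _ "t - min t (k - 3)"]) auto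
    next
      case 2
      then show ?thesis by (intro exI[of _ k] exI[of _ "t - k"]) auto
    next
      case 3
      then show ?thesis using assms by (intro exI[of _ "k + 1"] exI[of _ "k - 3"]) auto
    next
      case 4
      then show ?thesis
        using assms by (intro exI[of _ "min (t - k) (k + 1)"] exI[of _ "t - min (t - k) (k + 1)"]) auto
    qed
  qed
  then show ?thesis
    using that assms by (auto simp: mem_exponent_set_iff)
qed

lemma exponent_set_downward:
  assumes "2 \<le> k" "e \<in> exponent_set k" "e' + 3 < e"
  shows "e' \<in> exponent_set k"
  using assms by (auto simp: mem_exponent_set_iff)

lemma exponent_set_complement:
  assumes "2 \<le> k" "l < 2 * k" "l \<notin> exponent_set k"
  shows "2 * k - 1 - l \<in> exponent_set k"
  using assms by (auto simp: mem_exponent_set_iff)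

section \<open>Self-duality\<close>

lemma inner_Gmat_rows:
  "(\<Sum>i<n. Gmat k \<alpha> v r i * Gmat k \<alpha> v s i) = power_moment n (\<lambda>i. v i ^ 2) \<alpha> (gexp k r + gexp k s)"
  by (simp add: Gmat_def power_moment_def power_add power2_eq_square mult_ac)

lemma C_v_self_orthogonal_iff:
  assumes k: "5 \<le> k" and n: "n = 2 * k"
  shows "C_v k n \<alpha> v \<subseteq> dual_code n (C_v k n \<alpha> v) \<longleftrightarrow>
    (\<forall>t\<le>n + 2. t \<noteq> n - 1 \<longrightarrow> power_moment n (\<lambda>i. v i ^ 2) \<alpha> t = 0)"
proof -
  let ?W = "power_moment n (\<lambda>i. v i ^ 2) \<alpha>"
  have "C_v k n \<alpha> v \<subseteq> dual_code n (C_v k n \<alpha> v) \<longleftrightarrow>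
      (\<forall>e\<in>exponent_set k. \<forall>e'\<in>exponent_set k. ?W (e + e') = 0)"
    unfolding C_v_def row_code_self_orthogonal_iff inner_Gmat_rows exponent_set_def by blast
  also have "\<dots> \<longleftrightarrow> (\<forall>t\<le>n + 2. t \<noteq> n - 1 \<longrightarrow> ?W t = 0)"
  proof
    assume sums: "\<forall>e\<in>exponent_set k. \<forall>e'\<in>exponent_set k. ?W (e + e') = 0"
    show "\<forall>t\<le>n + 2. t \<noteq> n - 1 \<longrightarrow> ?W t = 0"
    proof (intro allI impI)
      fix t assume "t \<le> n + 2" "t \<noteq> n - 1"
      then obtain e e' where "e \<in> exponent_set k" "e' \<in> exponent_set k" "t = e + e'"
        using exponent_set_add_cover[OF k] n by blast
      then show "?W t = 0" using sums by blast
    qed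
  next
    assume "\<forall>t\<le>n + 2. t \<noteq> n - 1 \<longrightarrow> ?W t = 0"
    then show "\<forall>e\<in>exponent_set k. \<forall>e'\<in>exponent_set k. ?W (e + e') = 0"
      using exponent_set_add k n by auto
  qed
  finally show ?thesis .
qed

lemma exponent_set_coeff_descent:
  fixes c W :: "nat \<Rightarrow> 'a::field"
  assumes k: "2 \<le> k" and n: "n = 2 * k"
    and vanish: "\<And>t. t \<le> n + 2 \<Longrightarrow> t \<noteq> n - 1 \<Longrightarrow> W t = 0" and top: "W (n - 1) \<noteq> 0"
    and ortho: "\<And>e. e \<in> exponent_set k \<Longrightarrow> (\<Sum>l<n. c l * W (l + e)) = 0"
    and e: "e \<in> exponent_set k"
  shows "c (n - 1 - e) = 0"
  using e
proof (induction e rule: less_induct)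
  case (less e)
  have e_le: "e \<le> k + 1" by (rule exponent_set_le[OF less.prems])
  have others: "c l * W (l + e) = 0" if l: "l \<in> {..<n} - {n - 1 - e}" for l
  proof (cases "l + e \<le> n + 2")
    case True
    then show ?thesis using l e_le n k vanish by auto
  next
    case False
    \<comment> \<open>W (l + e) is unknown here, but l = n - 1 - e' for an exponent e' < e.\<close>
    then have "n - 1 - l + 3 < e" using l by auto
    then have "n - 1 - l < e" "n - 1 - l \<in> exponent_set k"
      using exponent_set_downward[OF k less.prems] by auto
    then have "c (n - 1 - (n - 1 - l)) = 0" by (rule less.IH)
    then show ?thesis using l by simp
  qed
  have "(\<Sum>l<n. c l * W (l + e)) =
      c (n - 1 - e) * W (n - 1 - e + e) + (\<Sum>l\<in>{..<n} - {n - 1 - e}. c l * W (l + e))"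
    using n k by (intro sum.remove) auto
  then have "(\<Sum>l<n. c l * W (l + e)) = c (n - 1 - e) * W (n - 1)"
    using others e_le n k by simp
  then show ?case using ortho[OF less.prems] top by simp
qed

lemma dual_code_C_v_coeff_orthogonal:
  assumes x: "x \<in> dual_code n (C_v k n \<alpha> v)" and deg: "degree p < n"
    and p: "\<And>i. i < n \<Longrightarrow> x i = v i * poly p (\<alpha> i)" and e: "e \<in> exponent_set k"
  shows "(\<Sum>l<n. coeff p l * power_moment n (\<lambda>i. v i ^ 2) \<alpha> (l + e)) = 0"
proof -
  obtain r where r: "r < k" "e = gexp k r" using e unfolding exponent_set_def by blast
  have "(\<Sum>l<n. coeff p l * power_moment n (\<lambda>i. v i ^ 2) \<alpha> (l + e)) =
      (\<Sum>i<n. (v i ^ 2 * \<alpha> i ^ e) * poly p (\<alpha> i))"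
    by (simp add: sum_mult_poly_eq_power_moments[OF deg] power_moment_shift)
  also have "\<dots> = (\<Sum>i<n. x i * Gmat k \<alpha> v r i)"
    using p r by (intro sum.cong) (auto simp: Gmat_def power2_eq_square)
  also have "\<dots> = 0"
    using dual_code_row_code_orthogonal x r unfolding C_v_def by blast
  finally show ?thesis .
qed

lemma mem_C_v_of_poly:
  assumes k: "2 \<le> k" and n: "n = 2 * k" and x: "x \<in> vecs n" and deg: "degree p < n"
    and p: "\<And>i. i < n \<Longrightarrow> x i = v i * poly p (\<alpha> i)"
    and support: "\<And>l. l \<notin> exponent_set k \<Longrightarrow> coeff p l = 0"
  shows "x \<in> C_v k n \<alpha> v"
proof -
  have exponents_below_n: "exponent_set k \<subseteq> {..<n}"
    using exponent_set_le n k by fastforce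
  have "x i = (if i < n then \<Sum>r<k. coeff p (gexp k r) * Gmat k \<alpha> v r i else 0)" for i
  proof (cases "i < n")
    case True
    have "x i = v i * (\<Sum>l<n. coeff p l * \<alpha> i ^ l)"
      using p[OF True] by (simp add: poly_eq_sum_coeff[OF deg])
    also have "(\<Sum>l<n. coeff p l * \<alpha> i ^ l) = (\<Sum>l\<in>exponent_set k. coeff p l * \<alpha> i ^ l)"
      using exponents_below_n support by (intro sum.mono_neutral_right) auto
    also have "\<dots> = (\<Sum>r<k. coeff p (gexp k r) * \<alpha> i ^ gexp k r)"
      unfolding exponent_set_def by (simp add: sum.reindex[OF inj_on_gexp])
    finally show ?thesis
      using True by (simp add: Gmat_def sum_distrib_left mult_ac)
  next
    case False
    then show ?thesis using x by (simp add: vecs_def)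
  qed
  then show ?thesis
    unfolding C_v_def row_code_def by (auto intro!: exI[of _ "\<lambda>r. coeff p (gexp k r)"])
qed

lemma dual_code_C_v_subset:
  fixes \<alpha> v :: "nat \<Rightarrow> 'a::field"
  assumes k: "2 \<le> k" and n: "n = 2 * k" and inj: "inj_on \<alpha> {0..<n}" and v: "\<forall>i<n. v i \<noteq> 0"
    and vanish: "\<And>t. t \<le> n + 2 \<Longrightarrow> t \<noteq> n - 1 \<Longrightarrow> power_moment n (\<lambda>i. v i ^ 2) \<alpha> t = 0"
  shows "dual_code n (C_v k n \<alpha> v) \<subseteq> C_v k n \<alpha> v"
proof
  fix x assume x: "x \<in> dual_code n (C_v k n \<alpha> v)"
  have top: "power_moment n (\<lambda>i. v i ^ 2) \<alpha> (n - 1) \<noteq> 0"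
    using power_moment_top_nonzero[OF inj, of _ 0] vanish v n k by simp
  have "0 < n" using n k by simp
  then obtain p where deg: "degree p < n" and "\<And>i. i < n \<Longrightarrow> poly p (\<alpha> i) = x i / v i"
    using interpolating_poly_exists[OF inj, of "\<lambda>i. x i / v i"] by blast
  then have p: "x i = v i * poly p (\<alpha> i)" if "i < n" for i
    using v that by simp
  have support: "coeff p l = 0" if "l \<notin> exponent_set k" for l
  proof (cases "l < n")
    case True
    have "coeff p (n - 1 - (n - 1 - l)) = 0"
      using exponent_set_coeff_descent[OF k n vanish top dual_code_C_v_coeff_orthogonal[OF x deg p]
          exponent_set_complement[OF k _ that]] True n
      by simp
    then show ?thesis using True by simp
  next
    case False
    then show ?thesis using deg by (simp add: coeff_eq_0)
  qed
  have "x \<in> vecs n" using x by (simp add: dual_code_def)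
  then show "x \<in> C_v k n \<alpha> v"
    using mem_C_v_of_poly[OF k n _ deg] p support by blast
qed

lemma self_dual_C_v_iff:
  fixes \<alpha> v :: "nat \<Rightarrow> 'a::field"
  assumes "5 \<le> k" "n = 2 * k" "inj_on \<alpha> {0..<n}" "\<forall>i<n. v i \<noteq> 0"
  shows "self_dual n (C_v k n \<alpha> v) \<longleftrightarrow>
    (\<forall>t\<le>n + 2. t \<noteq> n - 1 \<longrightarrow> power_moment n (\<lambda>i. v i ^ 2) \<alpha> t = 0)"
proof
  assume "self_dual n (C_v k n \<alpha> v)"
  then show "\<forall>t\<le>n + 2. t \<noteq> n - 1 \<longrightarrow> power_moment n (\<lambda>i. v i ^ 2) \<alpha> t = 0"
    using C_v_self_orthogonal_iff[OF assms(1,2)] unfolding self_dual_def by blast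
next
  assume vanish: "\<forall>t\<le>n + 2. t \<noteq> n - 1 \<longrightarrow> power_moment n (\<lambda>i. v i ^ 2) \<alpha> t = 0"
  then have "C_v k n \<alpha> v \<subseteq> dual_code n (C_v k n \<alpha> v)"
    using C_v_self_orthogonal_iff[OF assms(1,2)] by blast
  moreover have "dual_code n (C_v k n \<alpha> v) \<subseteq> C_v k n \<alpha> v"
    using dual_code_C_v_subset[OF _ assms(2-4)] assms(1) vanish by simp
  ultimately show "self_dual n (C_v k n \<alpha> v)"
    unfolding self_dual_def by blast
qed

theorem corollary3p15:
  fixes \<alpha> v :: "nat \<Rightarrow> 'a::{finite,field}" and k n :: nat
  assumes "k \<ge> 5" and "n = 2 * k" and "n \<le> CARD('a)"
    and "inj_on \<alpha> {0..<n}"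
    and "\<forall>i<n. v i \<noteq> 0"
  shows "self_dual n (C_v k n \<alpha> v) \<longleftrightarrow>
         ((\<exists>lam. lam \<noteq> 0 \<and> (\<forall>i<n. v i ^ 2 = lam * u_coef n \<alpha> i)) \<and>
          S_hom 1 n \<alpha> = 0 \<and> S_hom 2 n \<alpha> = 0 \<and> S_hom 3 n \<alpha> = 0)"
  unfolding self_dual_C_v_iff[OF assms(1,2,4,5)]
  using power_moments_vanish_iff[OF assms(4), of "\<lambda>i. v i ^ 2"] assms(1,2,5) by simp

end
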